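(* Let $f_1,\dots,f_k\in\mathbb{K}[\mathbf{x}]$ be nonzero multihomogeneous polynomials and $<$ a monomial order on $\mathbb{K}[\mathbf{x}]$. For every $\mathbf{d}\in\mathbb{Z}^r$, the polynomials corresponding to the rows of the matrix $\mathrm{M_3H}(\{f_1,\dots,f_k\},\mathbf{d},<)$ span the $\mathbb{K}$-vector space $[\langle f_1,\dots,f_k\rangle]_{\mathbf{d}}$.
   Context: $\mathbb{K}$ is a field of characteristic $0$; $\mathbb{K}[\mathbf{x}]$ is the polynomial ring in variables $x_{i,0},\dots,x_{i,n_i}$ ($1\le i\le r$), $\mathbb{Z}^r$-graded with $x_{i,j}$ of degree the $i$-th standard basis vector; $\mathbb{K}[\mathbf{x}]_{\mathbf{d}}$ and $[I]_{\mathbf{d}}$ denote multidegree-$\mathbf{d}$ parts (zero if $\mathbf{d}$ has a negative coordinate). A Macaulay matrix has columns indexed by monomials and rows representing polynomials (entry = coefficient). The procedure $\mathrm{M_3H}(\{f_1,\dots,f_k\},\mathbf{d},<)$ returns a Macaulay matrix with columns indexed by the monomials of $\mathbb{K}[\mathbf{x}]_{\mathbf{d}}$ in decreasing order for $<$, defined recursively: if $k=1$, start from the empty such matrix and set $\mathfrak{L}=\emptyset$; if $k>1$, start from the matrix $\mathrm{M_3H}(\{f_1,\dots,f_{k-1}\},\mathbf{d},<)$ and let $\mathfrak{L}$ be the set of leading monomials (for $<$) of the nonzero rows of the Gaussian elimination (row echelon form) of $\mathrm{M_3H}(\{f_1,\dots,f_{k-1}\},\mathbf{d}-\deg(f_k),<)$.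 Then, for every monomial $\mathbf{x}^\beta\in\mathbb{K}[\mathbf{x}]_{\mathbf{d}-\deg(f_k)}$ with $\mathbf{x}^\beta\notin\mathfrak{L}$, append the row $\mathbf{x}^\beta\cdot f_k$. Return the resulting matrix. *)

theory Defs
  imports Main "HOL-Library.Poly_Mapping"
begin

text \<open>Variables x_{i,j} are encoded as pairs (i,j) with i < r (blocks 0..r-1, i.e.
 block i+1 of the paper) and j \<le> n i.\<close>

type_synonym mon = "(nat \<times> nat) \<Rightarrow>\<^sub>0 nat"
type_synonym 'k mpoly = "mon \<Rightarrow>\<^sub>0 'k"

definition vars :: "nat \<Rightarrow> (nat \<Rightarrow> nat) \<Rightarrow> (nat \<times> nat) set" where
  "vars r n = {(i, j). i < r \<and> j \<le> n i}"

definition monoms :: "nat \<Rightarrow> (nat \<Rightarrow> nat) \<Rightarrow> mon set" where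
  "monoms r n = {m. Poly_Mapping.keys m \<subseteq> vars r n}"

definition polys :: "nat \<Rightarrow> (nat \<Rightarrow> nat) \<Rightarrow> 'k::zero mpoly set" where
  "polys r n = {p. Poly_Mapping.keys p \<subseteq> monoms r n}"

definition mdeg :: "nat \<Rightarrow> (nat \<Rightarrow> nat) \<Rightarrow> mon \<Rightarrow> int list" where
  "mdeg r n m = map (\<lambda>i. int (\<Sum>j\<le>n i. Poly_Mapping.lookup m (i, j))) [0..<r]"

text \<open>Monomials of K[x]_d (empty if d has a negative coordinate)\<close>
definition monoms_deg :: "nat \<Rightarrow> (nat \<Rightarrow> nat) \<Rightarrow> int list \<Rightarrow> mon set" where
  "monoms_deg r n d = {m \<in> monoms r n. mdeg r n m = d}"

definition multihomogeneous :: "nat \<Rightarrow> (nat \<Rightarrow> nat) \<Rightarrow> 'k::zero mpoly \<Rightarrow> bool" where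
  "multihomogeneous r n p \<longleftrightarrow> (\<exists>e. \<forall>m\<in>Poly_Mapping.keys p. mdeg r n m = e)"

definition pdeg :: "nat \<Rightarrow> (nat \<Rightarrow> nat) \<Rightarrow> 'k::zero mpoly \<Rightarrow> int list" where
  "pdeg r n p = mdeg r n (SOME m. m \<in> Poly_Mapping.keys p)"

definition polys_deg :: "nat \<Rightarrow> (nat \<Rightarrow> nat) \<Rightarrow> int list \<Rightarrow> 'k::zero mpoly set" where
  "polys_deg r n d = {p. Poly_Mapping.keys p \<subseteq> monoms_deg r n d}"

text \<open>Monomial order (strict relation) on the monomials of K[x]: strict total order,
 compatible with multiplication, well-founded (equivalently 1 is the minimum).\<close>
definition monomial_order :: "nat \<Rightarrow> (nat \<Rightarrow> nat) \<Rightarrow> (mon \<Rightarrow> mon \<Rightarrow> bool) \<Rightarrow> bool" where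
  "monomial_order r n ord \<longleftrightarrow>
     (\<forall>a\<in>monoms r n. \<not> ord a a) \<and>
     (\<forall>a\<in>monoms r n. \<forall>b\<in>monoms r n. \<forall>c\<in>monoms r n. ord a b \<longrightarrow> ord b c \<longrightarrow> ord a c) \<and>
     (\<forall>a\<in>monoms r n. \<forall>b\<in>monoms r n. a = b \<or> ord a b \<or> ord b a) \<and>
     (\<forall>a\<in>monoms r n. \<forall>b\<in>monoms r n. \<forall>c\<in>monoms r n. ord a b \<longrightarrow> ord (a + c) (b + c)) \<and>
     wf {(a, b). a \<in> monoms r n \<and> b \<in> monoms r n \<and> ord a b}"

definition lm :: "(mon \<Rightarrow> mon \<Rightarrow> bool) \<Rightarrow> 'k::zero mpoly \<Rightarrow> mon" where
  "lm ord p = (THE m. m \<in> Poly_Mapping.keys p \<and> (\<forall>m'\<in>Poly_Mapping.keys p. m' \<noteq> m \<longrightarrow> ord m' m))"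

definition lin_span :: "'k::field mpoly set \<Rightarrow> 'k mpoly set" where
  "lin_span S = {p. \<exists>A c. finite A \<and> A \<subseteq> S \<and>
                    p = (\<Sum>q\<in>A. Poly_Mapping.single 0 (c q) * q)}"

text \<open>Row echelon form E of a matrix with rows R (rows as polynomials, columns ordered
 decreasingly by ord): E is row-equivalent to R (same row space, same number of rows),
 nonzero rows come first with strictly decreasing leading monomials, then zero rows.\<close>
definition is_row_echelon_of :: "(mon \<Rightarrow> mon \<Rightarrow> bool) \<Rightarrow> 'k::field mpoly list \<Rightarrow> 'k mpoly list \<Rightarrow> bool" where
  "is_row_echelon_of ord R E \<longleftrightarrow>
     length E = length R \<and> lin_span (set E) = lin_span (set R) \<and>
     (\<exists>E1 z. E = E1 @ replicate z 0 \<and> (\<forall>p\<in>set E1. p \<noteq> 0) \<and>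
             sorted_wrt (\<lambda>p q. ord (lm ord q) (lm ord p)) E1)"

definition lead_set :: "(mon \<Rightarrow> mon \<Rightarrow> bool) \<Rightarrow> 'k::field mpoly list \<Rightarrow> mon set" where
  "lead_set ord R = (let E = (SOME E. is_row_echelon_of ord R E) in
                       lm ord ` {p \<in> set E. p \<noteq> 0})"

definition deg_sub :: "int list \<Rightarrow> int list \<Rightarrow> int list" where
  "deg_sub d e = map2 (-) d e"

definition dec_list :: "(mon \<Rightarrow> mon \<Rightarrow> bool) \<Rightarrow> mon set \<Rightarrow> mon list" where
  "dec_list ord B = (SOME bs. distinct bs \<and> set bs = B \<and> sorted_wrt (\<lambda>a b. ord b a) bs)"

text \<open>M3H on the reversed list of generators: M3H_rev (f_k # ... # f_1) d.\<close>
fun M3H_rev :: "nat \<Rightarrow> (nat \<Rightarrow> nat) \<Rightarrow> (mon \<Rightarrow> mon \<Rightarrow> bool) \<Rightarrow> 'k::field mpoly list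
                \<Rightarrow> int list \<Rightarrow> 'k mpoly list" where
  "M3H_rev r n ord [] d = []"
| "M3H_rev r n ord (f # fs) d =
     (let e = deg_sub d (pdeg r n f);
          L = (if fs = [] then {} else lead_set ord (M3H_rev r n ord fs e))
      in M3H_rev r n ord fs d @
         map (\<lambda>\<beta>. Poly_Mapping.single \<beta> 1 * f) (dec_list ord (monoms_deg r n e - L)))"

text \<open>Rows (as polynomials) of the Macaulay matrix M3H({f_1,...,f_k}, d, ord)\<close>
definition M3H :: "nat \<Rightarrow> (nat \<Rightarrow> nat) \<Rightarrow> (mon \<Rightarrow> mon \<Rightarrow> bool) \<Rightarrow> 'k::field mpoly list
                \<Rightarrow> int list \<Rightarrow> 'k mpoly list" where
  "M3H r n ord fs d = M3H_rev r n ord (rev fs) d"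

definition ideal_gen :: "nat \<Rightarrow> (nat \<Rightarrow> nat) \<Rightarrow> 'k::comm_ring_1 mpoly list \<Rightarrow> 'k mpoly set" where
  "ideal_gen r n fs = {p. \<exists>gs. length gs = length fs \<and> set gs \<subseteq> polys r n \<and>
                           p = sum_list (map2 (*) gs fs)}"

definition ideal_deg :: "nat \<Rightarrow> (nat \<Rightarrow> nat) \<Rightarrow> 'k::comm_ring_1 mpoly list \<Rightarrow> int list \<Rightarrow> 'k mpoly set" where
  "ideal_deg r n fs d = ideal_gen r n fs \<inter> polys_deg r n d"

end

theory Submission
  imports Defs "HOL.Vector_Spaces"
begin

(* Every row of M3H(f_1, ..., f_k, d) is a product x^beta f_i of multidegree d, and the
   degree-d part of the ideal is spanned by all such products: taking the degree-d component of
   a combination sum g_i f_i keeps exactly the terms x^beta f_i of degree d.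
   Conversely, by induction on k, the products x^beta f_k that are left out still lie in the row
   span. Such an x^beta is the leading monomial of some g in the row span of
   M3H(f_1, ..., f_(k-1), d - deg f_k), which by induction consists of the combinations of
   multiples of f_1, ..., f_(k-1) of that degree; so g f_k is a combination of the degree-d
   multiples of f_1, ..., f_(k-1), i.e. of earlier rows. Since g f_k - c x^beta f_k only involves
   products x^gamma f_k with gamma < beta, well-founded induction along the monomial order puts
   x^beta f_k into the row span. *)

abbreviation cmult :: "'k::comm_ring_1 \<Rightarrow> 'k mpoly \<Rightarrow> 'k mpoly" where
  "cmult c p \<equiv> Poly_Mapping.single 0 c * p"

abbreviation monom_mult :: "mon \<Rightarrow> 'k::comm_ring_1 mpoly \<Rightarrow> 'k mpoly" where
  "monom_mult \<beta> p \<equiv> Poly_Mapping.single \<beta> 1 * p"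

interpretation V: vector_space "cmult :: 'k::field \<Rightarrow> 'k mpoly \<Rightarrow> 'k mpoly"
  by unfold_locales (auto simp: algebra_simps single_add mult_single)

lemma lin_span_eq_span: "lin_span S = V.span S"
  unfolding lin_span_def V.span_explicit by blast

lemma lookup_cmult [simp]: "Poly_Mapping.lookup (cmult c p) m = c * Poly_Mapping.lookup p m"
  by (simp flip: mult_map_scale_conv_mult add: map.rep_eq when_def)

lemma keys_cmult_subset: "Poly_Mapping.keys (cmult c p) \<subseteq> Poly_Mapping.keys p"
  by (auto simp: in_keys_iff)

lemma keys_monom_mult_subset:
  "Poly_Mapping.keys (monom_mult \<beta> p) \<subseteq> (+) \<beta> ` Poly_Mapping.keys p"
  using keys_mult[of "Poly_Mapping.single \<beta> 1" p] by auto

lemma monom_mult_monom_mult: "monom_mult \<alpha> (monom_mult \<beta> p) = monom_mult (\<alpha> + \<beta>) p"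
  by (simp add: mult.assoc[symmetric] mult_single)

lemma mult_eq_sum_monom_mults:
  "g * p = (\<Sum>\<gamma>\<in>Poly_Mapping.keys g. cmult (Poly_Mapping.lookup g \<gamma>) (monom_mult \<gamma> p))"
proof -
  have expansion: "(\<Sum>\<gamma>\<in>Poly_Mapping.keys g. Poly_Mapping.single \<gamma> (Poly_Mapping.lookup g \<gamma>)) = g"
    by (rule poly_mapping_eqI) (simp add: lookup_sum lookup_single when_def in_keys_iff)
  have "g * p = (\<Sum>\<gamma>\<in>Poly_Mapping.keys g. Poly_Mapping.single \<gamma> (Poly_Mapping.lookup g \<gamma>) * p)"
    by (simp only: sum_distrib_right[symmetric] expansion)
  also have "\<dots> = (\<Sum>\<gamma>\<in>Poly_Mapping.keys g. cmult (Poly_Mapping.lookup g \<gamma>) (monom_mult \<gamma> p))"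
    by (simp only: mult.assoc[symmetric] mult_single add_0 mult_1_right)
  finally show ?thesis .
qed

lemma mult_in_span:
  assumes "h \<in> V.span S" and "\<And>s. s \<in> S \<Longrightarrow> g * s \<in> V.span T"
  shows "g * h \<in> V.span T"
  using assms(1)
proof (induction rule: V.span_induct_alt)
  case base
  then show ?case by (simp add: V.span_zero)
next
  case (step c s h)
  have "g * (cmult c s + h) = cmult c (g * s) + g * h"
    by (simp add: distrib_left mult.left_commute)
  then show ?case
    using step assms(2) by (simp add: V.span_add V.span_scale)
qed

section \<open>Multidegrees\<close>

lemma length_mdeg [simp]: "length (mdeg r n m) = r"
  by (simp add: mdeg_def)

lemma mdeg_add_eq_iff:
  "length d = r \<Longrightarrow> mdeg r n (a + b) = d \<longleftrightarrow> mdeg r n a = deg_sub d (mdeg r n b)"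
  by (auto simp: list_eq_iff_nth_eq mdeg_def deg_sub_def lookup_add sum.distrib algebra_simps)

lemma deg_sub_commute: "deg_sub (deg_sub d a) b = deg_sub (deg_sub d b) a"
  by (simp add: list_eq_iff_nth_eq deg_sub_def)

lemma length_pdeg [simp]: "length (pdeg r n f) = r"
  by (simp add: pdeg_def)

lemma length_deg_sub [simp]: "length (deg_sub d e) = min (length d) (length e)"
  by (simp add: deg_sub_def)

lemma mdeg_eq_pdeg:
  assumes "multihomogeneous r n f" "m \<in> Poly_Mapping.keys f"
  shows "mdeg r n m = pdeg r n f"
proof -
  obtain e where "\<forall>m\<in>Poly_Mapping.keys f. mdeg r n m = e"
    using assms(1) unfolding multihomogeneous_def by blast
  moreover have "(SOME m. m \<in> Poly_Mapping.keys f) \<in> Poly_Mapping.keys f"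
    using assms(2) by (rule someI)
  ultimately show ?thesis
    using assms(2) unfolding pdeg_def by auto
qed

lemma finite_vars: "finite (vars r n)"
proof -
  have "vars r n = Sigma {..<r} (\<lambda>i. {..n i})" by (auto simp: vars_def)
  then show ?thesis by simp
qed

lemma finite_monoms_deg: "finite (monoms_deg r n d)"
proof -
  define N where "N = nat (Max (insert 0 (set d)))"
  have bound: "Poly_Mapping.lookup m (i, j) \<le> N" if "m \<in> monoms_deg r n d" "(i, j) \<in> vars r n" for m i j
  proof -
    have ij: "i < r" "j \<le> n i" using that(2) by (auto simp: vars_def)
    have "d = mdeg r n m" using that(1) by (simp add: monoms_deg_def)
    then have "d ! i = int (\<Sum>j'\<le>n i. Poly_Mapping.lookup m (i, j'))" and "i < length d"
      using ij by (auto simp: mdeg_def)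
    moreover have "Poly_Mapping.lookup m (i, j) \<le> (\<Sum>j'\<le>n i. Poly_Mapping.lookup m (i, j'))"
      using ij by (intro member_le_sum) auto
    moreover have "d ! i \<le> Max (insert 0 (set d))"
      using \<open>i < length d\<close> by (intro Max_ge) auto
    ultimately show ?thesis unfolding N_def by linarith
  qed
  have "Poly_Mapping.lookup ` monoms_deg r n d \<subseteq>
      {h. \<forall>x. (x \<in> vars r n \<longrightarrow> h x \<in> {..N}) \<and> (x \<notin> vars r n \<longrightarrow> h x = 0)}"
    using bound by (fastforce simp: monoms_deg_def monoms_def in_keys_iff)
  then have "finite (Poly_Mapping.lookup ` monoms_deg r n d)"
    by (rule finite_subset) (intro finite_set_of_finite_funs finite_vars finite_atMost)
  then show ?thesis
    by (rule finite_imageD) (simp add: inj_on_def lookup_inject)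
qed

lemma monoms_add: "a \<in> monoms r n \<Longrightarrow> b \<in> monoms r n \<Longrightarrow> a + b \<in> monoms r n"
  unfolding monoms_def using keys_add[of a b] by auto

lemma subspace_keys_subset: "V.subspace {p :: 'k::field mpoly. Poly_Mapping.keys p \<subseteq> M}"
  unfolding V.subspace_def
proof (intro conjI ballI allI)
  fix p q :: "'k mpoly"
  assume "p \<in> {p. Poly_Mapping.keys p \<subseteq> M}" "q \<in> {p. Poly_Mapping.keys p \<subseteq> M}"
  then show "p + q \<in> {p. Poly_Mapping.keys p \<subseteq> M}"
    using keys_add[of p q] by auto
next
  fix c and p :: "'k mpoly"
  assume "p \<in> {p. Poly_Mapping.keys p \<subseteq> M}"
  then show "cmult c p \<in> {p. Poly_Mapping.keys p \<subseteq> M}"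
    using keys_cmult_subset[of c p] by auto
qed simp

lemma subspace_polys: "V.subspace (polys r n :: 'k::field mpoly set)"
  unfolding polys_def by (rule subspace_keys_subset)

lemma subspace_polys_deg: "V.subspace (polys_deg r n d :: 'k::field mpoly set)"
  unfolding polys_deg_def by (rule subspace_keys_subset)

lemma zero_in_polys: "0 \<in> polys r n"
  by (simp add: polys_def)

lemma polys_deg_subset_polys: "polys_deg r n d \<subseteq> polys r n"
  unfolding polys_deg_def polys_def monoms_deg_def by auto

section \<open>Multiples of the generators of a given degree\<close>

definition homogeneous_gens :: "nat \<Rightarrow> (nat \<Rightarrow> nat) \<Rightarrow> 'k::zero mpoly list \<Rightarrow> bool" where
  "homogeneous_gens r n fs \<longleftrightarrow> (\<forall>f\<in>set fs. f \<in> polys r n \<and> f \<noteq> 0 \<and> multihomogeneous r n f)"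

definition monom_multiples :: "nat \<Rightarrow> (nat \<Rightarrow> nat) \<Rightarrow> 'k::comm_ring_1 mpoly list \<Rightarrow> 'k mpoly set" where
  "monom_multiples r n fs = {monom_mult \<beta> f | f \<beta>. f \<in> set fs \<and> \<beta> \<in> monoms r n}"

definition deg_multiples ::
  "nat \<Rightarrow> (nat \<Rightarrow> nat) \<Rightarrow> 'k::comm_ring_1 mpoly list \<Rightarrow> int list \<Rightarrow> 'k mpoly set" where
  "deg_multiples r n fs d =
     {monom_mult \<beta> f | f \<beta>. f \<in> set fs \<and> \<beta> \<in> monoms_deg r n (deg_sub d (pdeg r n f))}"

lemma deg_multiples_Nil [simp]: "deg_multiples r n [] d = {}"
  by (simp add: deg_multiples_def)

lemma deg_multiples_Cons:
  "deg_multiples r n (f # fs) d =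
     (\<lambda>\<beta>. monom_mult \<beta> f) ` monoms_deg r n (deg_sub d (pdeg r n f)) \<union> deg_multiples r n fs d"
  unfolding deg_multiples_def by auto

lemma deg_multiples_rev [simp]: "deg_multiples r n (rev fs) d = deg_multiples r n fs d"
  by (simp add: deg_multiples_def)

lemma mdeg_keys_monom_mult_iff:
  assumes "multihomogeneous r n f" "length d = r" "k \<in> Poly_Mapping.keys (monom_mult \<beta> f)"
  shows "mdeg r n k = d \<longleftrightarrow> mdeg r n \<beta> = deg_sub d (pdeg r n f)"
proof -
  obtain m where "m \<in> Poly_Mapping.keys f" "k = \<beta> + m"
    using keys_monom_mult_subset assms(3) by blast
  then show ?thesis
    using mdeg_add_eq_iff[OF assms(2)] mdeg_eq_pdeg[OF assms(1)] by simp
qed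

lemma monom_mult_in_polys_deg:
  assumes "f \<in> polys r n" "multihomogeneous r n f" "length d = r"
    and \<beta>: "\<beta> \<in> monoms_deg r n (deg_sub d (pdeg r n f))"
  shows "monom_mult \<beta> f \<in> polys_deg r n d"
  unfolding polys_deg_def
proof (intro CollectI subsetI)
  fix k assume k: "k \<in> Poly_Mapping.keys (monom_mult \<beta> f)"
  then obtain m where m: "m \<in> Poly_Mapping.keys f" "k = \<beta> + m"
    using keys_monom_mult_subset by blast
  have "k \<in> monoms r n"
    using m \<beta> assms(1) monoms_add[of \<beta> r n m] by (auto simp: monoms_deg_def polys_def)
  moreover have "mdeg r n k = d"
    using mdeg_keys_monom_mult_iff[OF assms(2,3) k] \<beta> by (simp add: monoms_deg_def)
  ultimately show "k \<in> monoms_deg r n d"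
    by (simp add: monoms_deg_def)
qed

lemma deg_multiples_subset_polys_deg:
  "homogeneous_gens r n fs \<Longrightarrow> length d = r \<Longrightarrow> deg_multiples r n fs d \<subseteq> polys_deg r n d"
  unfolding deg_multiples_def homogeneous_gens_def by (auto intro: monom_mult_in_polys_deg)

lemma ideal_gen_iff:
  "p \<in> ideal_gen r n fs \<longleftrightarrow>
     (\<exists>g. (\<forall>i<length fs. g i \<in> polys r n) \<and> p = (\<Sum>i<length fs. g i * fs ! i))"
proof
  assume "p \<in> ideal_gen r n fs"
  then obtain gs where gs: "length gs = length fs" "set gs \<subseteq> polys r n" "p = sum_list (map2 (*) gs fs)"
    unfolding ideal_gen_def by blast
  then have "p = (\<Sum>i<length fs. gs ! i * fs ! i)"
    by (simp add: sum_list_sum_nth atLeast0LessThan)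
  then show "\<exists>g. (\<forall>i<length fs. g i \<in> polys r n) \<and> p = (\<Sum>i<length fs. g i * fs ! i)"
    using gs by (intro exI[of _ "nth gs"]) auto
next
  assume "\<exists>g. (\<forall>i<length fs. g i \<in> polys r n) \<and> p = (\<Sum>i<length fs. g i * fs ! i)"
  then obtain g where g: "\<forall>i<length fs. g i \<in> polys r n" "p = (\<Sum>i<length fs. g i * fs ! i)"
    by blast
  have "sum_list (map2 (*) (map g [0..<length fs]) fs) = (\<Sum>i<length fs. g i * fs ! i)"
    by (simp add: sum_list_sum_nth atLeast0LessThan)
  then show "p \<in> ideal_gen r n fs"
    unfolding ideal_gen_def using g by (intro CollectI exI[of _ "map g [0..<length fs]"]) auto
qed

lemma subspace_ideal_gen: "V.subspace (ideal_gen r n (fs :: 'k::field mpoly list))"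
  unfolding V.subspace_def
proof (intro conjI ballI allI)
  show "0 \<in> ideal_gen r n fs"
    unfolding ideal_gen_iff by (intro exI[of _ "\<lambda>_. 0"]) (simp add: zero_in_polys)
next
  fix p q assume "p \<in> ideal_gen r n fs" "q \<in> ideal_gen r n fs"
  then obtain g h where g: "\<forall>i<length fs. g i \<in> polys r n" "p = (\<Sum>i<length fs. g i * fs ! i)"
    and h: "\<forall>i<length fs. h i \<in> polys r n" "q = (\<Sum>i<length fs. h i * fs ! i)"
    unfolding ideal_gen_iff by blast
  show "p + q \<in> ideal_gen r n fs"
    unfolding ideal_gen_iff using g h
    by (intro exI[of _ "\<lambda>i. g i + h i"])
      (simp add: V.subspace_add[OF subspace_polys] sum.distrib distrib_right)
next
  fix c p assume "p \<in> ideal_gen r n fs"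
  then obtain g where g: "\<forall>i<length fs. g i \<in> polys r n" "p = (\<Sum>i<length fs. g i * fs ! i)"
    unfolding ideal_gen_iff by blast
  show "cmult c p \<in> ideal_gen r n fs"
    unfolding ideal_gen_iff using g
    by (intro exI[of _ "\<lambda>i. cmult c (g i)"])
      (simp add: V.subspace_scale[OF subspace_polys] sum_distrib_left mult.assoc)
qed

lemma span_monom_multiples: "V.span (monom_multiples r n fs) = ideal_gen r n (fs :: 'k::field mpoly list)"
proof
  have "monom_mult \<beta> (fs ! k) \<in> ideal_gen r n fs" if "\<beta> \<in> monoms r n" "k < length fs" for \<beta> k
    unfolding ideal_gen_iff
  proof (intro exI conjI allI impI)
    show "(if i = k then Poly_Mapping.single \<beta> 1 else 0) \<in> polys r n" for i
      using that(1) by (simp add: polys_def)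
    show "monom_mult \<beta> (fs ! k) = (\<Sum>i<length fs. (if i = k then Poly_Mapping.single \<beta> 1 else 0) * fs ! i)"
      using that(2) by (simp add: if_distrib[of "\<lambda>g. g * _"] sum.delta cong: if_cong)
  qed
  then have "monom_multiples r n fs \<subseteq> ideal_gen r n fs"
    unfolding monom_multiples_def by (auto simp: in_set_conv_nth)
  then show "V.span (monom_multiples r n fs) \<subseteq> ideal_gen r n fs"
    by (rule V.span_minimal) (rule subspace_ideal_gen)
next
  show "ideal_gen r n fs \<subseteq> V.span (monom_multiples r n fs)"
  proof
    fix p assume "p \<in> ideal_gen r n fs"
    then obtain g where g: "\<forall>i<length fs. g i \<in> polys r n" "p = (\<Sum>i<length fs. g i * fs ! i)"
      unfolding ideal_gen_iff by blast
    have "g i * fs ! i \<in> V.span (monom_multiples r n fs)" if i: "i < length fs" for i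
      unfolding mult_eq_sum_monom_mults[of "g i"]
    proof (intro V.span_sum V.span_scale V.span_base)
      fix \<gamma> assume "\<gamma> \<in> Poly_Mapping.keys (g i)"
      then have "\<gamma> \<in> monoms r n"
        using g(1) i unfolding polys_def by blast
      then show "monom_mult \<gamma> (fs ! i) \<in> monom_multiples r n fs"
        using nth_mem[OF i] unfolding monom_multiples_def by blast
    qed
    then show "p \<in> V.span (monom_multiples r n fs)"
      unfolding g(2) by (intro V.span_sum) simp
  qed
qed

definition hom_component :: "nat \<Rightarrow> (nat \<Rightarrow> nat) \<Rightarrow> int list \<Rightarrow> 'k::zero mpoly \<Rightarrow> 'k mpoly" where
  "hom_component r n d q =
     Abs_poly_mapping (\<lambda>m. if mdeg r n m = d then Poly_Mapping.lookup q m else 0)"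

lemma lookup_hom_component:
  "Poly_Mapping.lookup (hom_component r n d q) m =
     (if mdeg r n m = d then Poly_Mapping.lookup q m else 0)"
proof -
  have "finite {m. (if mdeg r n m = d then Poly_Mapping.lookup q m else 0) \<noteq> 0}"
    by (rule finite_subset[OF _ finite_keys[of q]]) (auto simp: in_keys_iff)
  then show ?thesis
    unfolding hom_component_def by simp
qed

lemma hom_component_in_span:
  assumes "q \<in> V.span X" "\<And>x. x \<in> X \<Longrightarrow> hom_component r n d x \<in> V.span Y"
  shows "hom_component r n d (q :: 'k::field mpoly) \<in> V.span Y"
  using assms(1)
proof (induction rule: V.span_induct_alt)
  case base
  have "hom_component r n d (0 :: 'k mpoly) = 0"
    by (rule poly_mapping_eqI) (simp add: lookup_hom_component)
  then show ?case by (simp add: V.span_zero)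
next
  case (step c x q)
  have "hom_component r n d (cmult c x + q) = cmult c (hom_component r n d x) + hom_component r n d q"
    by (rule poly_mapping_eqI) (simp add: lookup_hom_component lookup_add)
  then show ?case
    using step assms(2) by (simp add: V.span_add V.span_scale)
qed

lemma hom_component_monom_mult:
  assumes "multihomogeneous r n f" "length d = r"
  shows "hom_component r n d (monom_mult \<beta> f) =
           (if mdeg r n \<beta> = deg_sub d (pdeg r n f) then monom_mult \<beta> f else 0)"
  using mdeg_keys_monom_mult_iff[OF assms]
  by (intro poly_mapping_eqI) (auto simp: lookup_hom_component in_keys_iff)

lemma hom_component_monom_multiple:
  assumes fs: "homogeneous_gens r n fs" and d: "length d = r" and x: "x \<in> monom_multiples r n fs"
  shows "hom_component r n d x \<in> V.span (deg_multiples r n (fs :: 'k::field mpoly list) d)"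
proof -
  obtain f \<beta> where x: "x = monom_mult \<beta> f" and f: "f \<in> set fs" and \<beta>: "\<beta> \<in> monoms r n"
    using x unfolding monom_multiples_def by blast
  have "multihomogeneous r n f"
    using fs f unfolding homogeneous_gens_def by blast
  then have "hom_component r n d x = (if mdeg r n \<beta> = deg_sub d (pdeg r n f) then x else 0)"
    unfolding x using d by (rule hom_component_monom_mult)
  moreover have "x \<in> deg_multiples r n fs d" if "mdeg r n \<beta> = deg_sub d (pdeg r n f)"
    using f \<beta> that unfolding x deg_multiples_def monoms_deg_def by blast
  ultimately show ?thesis
    by (simp add: V.span_base V.span_zero)
qed

lemma ideal_deg_eq_span_deg_multiples:
  assumes fs: "homogeneous_gens r n fs" and d: "length d = r"
  shows "ideal_deg r n fs d = V.span (deg_multiples r n (fs :: 'k::field mpoly list) d)"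
proof
  show "ideal_deg r n fs d \<subseteq> V.span (deg_multiples r n fs d)"
  proof
    fix p assume p: "p \<in> ideal_deg r n fs d"
    then have "p = hom_component r n d p"
      by (intro poly_mapping_eqI)
        (auto simp: lookup_hom_component ideal_deg_def polys_deg_def monoms_deg_def in_keys_iff)
    also have "\<dots> \<in> V.span (deg_multiples r n fs d)"
    proof (rule hom_component_in_span)
      show "p \<in> V.span (monom_multiples r n fs)"
        using p by (simp add: span_monom_multiples ideal_deg_def)
    qed (rule hom_component_monom_multiple[OF fs d])
    finally show "p \<in> V.span (deg_multiples r n fs d)" .
  qed
next
  have "deg_multiples r n fs d \<subseteq> monom_multiples r n fs"
    unfolding deg_multiples_def monom_multiples_def monoms_deg_def by blast
  then have "deg_multiples r n fs d \<subseteq> ideal_gen r n fs"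
    using V.span_superset span_monom_multiples by blast
  then have "deg_multiples r n fs d \<subseteq> ideal_deg r n fs d"
    using deg_multiples_subset_polys_deg[OF fs d] unfolding ideal_deg_def by blast
  then show "V.span (deg_multiples r n fs d) \<subseteq> ideal_deg r n fs d"
    unfolding ideal_deg_def
    by (intro V.span_minimal V.subspace_inter subspace_ideal_gen subspace_polys_deg) simp
qed

lemma mult_span_deg_multiples:
  assumes f: "f \<in> polys r n" "multihomogeneous r n f" and d: "length d = r"
    and g: "g \<in> V.span (deg_multiples r n fs (deg_sub d (pdeg r n f)))"
  shows "f * g \<in> V.span (deg_multiples r n (fs :: 'k::field mpoly list) d)"
  using g
proof (rule mult_in_span)
  fix s assume "s \<in> deg_multiples r n fs (deg_sub d (pdeg r n f))"
  then obtain f' \<beta> where s: "s = monom_mult \<beta> f'" and f': "f' \<in> set fs"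
    and \<beta>: "\<beta> \<in> monoms_deg r n (deg_sub (deg_sub d (pdeg r n f)) (pdeg r n f'))"
    unfolding deg_multiples_def by blast
  have "monom_mult (m + \<beta>) f' \<in> deg_multiples r n fs d" if m: "m \<in> Poly_Mapping.keys f" for m
  proof -
    have "m + \<beta> \<in> monoms r n"
      using m f(1) \<beta> by (intro monoms_add) (auto simp: polys_def monoms_deg_def)
    moreover have "mdeg r n (\<beta> + m) = deg_sub d (pdeg r n f')"
      using \<beta> d mdeg_eq_pdeg[OF f(2) m]
      by (simp add: mdeg_add_eq_iff monoms_deg_def deg_sub_commute)
    ultimately show ?thesis
      using f' unfolding deg_multiples_def monoms_deg_def by (auto simp: add.commute)
  qed
  then show "f * s \<in> V.span (deg_multiples r n fs d)"
    unfolding s mult_eq_sum_monom_mults[of f] monom_mult_monom_mult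
    by (intro V.span_sum V.span_scale V.span_base)
qed

section \<open>Leading monomials and row echelon forms\<close>

lemma finite_strict_total_order_sorted_list:
  assumes "finite B" "irreflp_on B R" "transp_on B R" "totalp_on B R"
  shows "\<exists>xs. distinct xs \<and> set xs = B \<and> sorted_wrt R xs"
  using assms
proof (induction B rule: finite_induct)
  case empty
  then show ?case by simp
next
  case (insert x F)
  have "irreflp_on F R" "transp_on F R" "totalp_on F R"
    using insert.prems irreflp_on_subset transp_on_subset totalp_on_subset
    by (metis subset_insertI)+
  then obtain xs where xs: "distinct xs" "set xs = F" "sorted_wrt R xs"
    using insert.IH by blast
  let ?ys = "filter (\<lambda>y. R y x) xs @ x # filter (R x) xs"
  have not_both: "\<not> (R y x \<and> R x y)" if "y \<in> F" for y
    using transp_onD[OF insert.prems(2), of y x y] irreflp_onD[OF insert.prems(1), of y] that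
    by blast
  have "distinct ?ys"
    using xs insert.hyps(2) not_both by (auto simp: distinct_append)
  moreover have "set ?ys = insert x F"
    using xs insert.prems(3) insert.hyps(2) by (auto dest: totalp_onD)
  moreover have "sorted_wrt R ?ys"
    using xs transp_onD[OF insert.prems(2)] by (auto simp: sorted_wrt_append sorted_wrt_filter)
  ultimately show ?case by blast
qed

locale mon_order =
  fixes r :: nat and n :: "nat \<Rightarrow> nat" and ord :: "mon \<Rightarrow> mon \<Rightarrow> bool"
  assumes monomial_order: "monomial_order r n ord"
begin

lemma irreflp_on_ord: "irreflp_on (monoms r n) ord"
  using monomial_order unfolding monomial_order_def irreflp_on_def by blast

lemma transp_on_ord: "transp_on (monoms r n) ord"
  using monomial_order unfolding monomial_order_def transp_on_def by blast

lemma totalp_on_ord: "totalp_on (monoms r n) ord"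
  using monomial_order unfolding monomial_order_def totalp_on_def by blast

lemma wf_ord: "wf {(a, b). a \<in> monoms r n \<and> b \<in> monoms r n \<and> ord a b}"
  using monomial_order unfolding monomial_order_def by blast

lemma ex_decreasing_list:
  assumes "finite B" "B \<subseteq> monoms r n"
  shows "\<exists>xs. distinct xs \<and> set xs = B \<and> sorted_wrt (\<lambda>a b. ord b a) xs"
proof (rule finite_strict_total_order_sorted_list[OF assms(1)])
  show "irreflp_on B (\<lambda>a b. ord b a)"
    using irreflp_on_subset[OF irreflp_on_ord assms(2)] unfolding irreflp_on_def .
  show "transp_on B (\<lambda>a b. ord b a)"
    using transp_on_subset[OF transp_on_ord assms(2)] unfolding transp_on_def by blast
  show "totalp_on B (\<lambda>a b. ord b a)"
    using totalp_on_subset[OF totalp_on_ord assms(2)] unfolding totalp_on_def by blast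
qed

lemma set_dec_list: "finite B \<Longrightarrow> B \<subseteq> monoms r n \<Longrightarrow> set (dec_list ord B) = B"
  unfolding dec_list_def using someI_ex[OF ex_decreasing_list] by blast

lemma lm_in_keys_greatest:
  assumes "p \<noteq> 0" "Poly_Mapping.keys p \<subseteq> monoms r n"
  shows "lm ord p \<in> Poly_Mapping.keys p \<and>
    (\<forall>m\<in>Poly_Mapping.keys p. m \<noteq> lm ord p \<longrightarrow> ord m (lm ord p))"
proof -
  obtain xs where xs: "set xs = Poly_Mapping.keys p" "sorted_wrt (\<lambda>a b. ord b a) xs"
    using ex_decreasing_list[OF finite_keys assms(2)] by blast
  then obtain m0 xs' where "xs = m0 # xs'"
    using assms(1) by (cases xs) (auto simp flip: keys_eq_empty)
  then have m0: "m0 \<in> Poly_Mapping.keys p \<and> (\<forall>m\<in>Poly_Mapping.keys p. m \<noteq> m0 \<longrightarrow> ord m m0)"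
    using xs by auto
  have "\<exists>!m. m \<in> Poly_Mapping.keys p \<and> (\<forall>m'\<in>Poly_Mapping.keys p. m' \<noteq> m \<longrightarrow> ord m' m)"
  proof (rule ex1I[of _ m0])
    fix m assume m: "m \<in> Poly_Mapping.keys p \<and> (\<forall>m'\<in>Poly_Mapping.keys p. m' \<noteq> m \<longrightarrow> ord m' m)"
    show "m = m0"
    proof (rule ccontr)
      assume "m \<noteq> m0"
      then have "ord m m0" "ord m0 m" using m m0 by auto
      then show False
        using m m0 assms(2) transp_onD[OF transp_on_ord] irreflp_onD[OF irreflp_on_ord] by blast
    qed
  qed (rule m0)
  then show ?thesis
    unfolding lm_def by (rule theI')
qed

lemma lm_in_keys: "p \<noteq> 0 \<Longrightarrow> Poly_Mapping.keys p \<subseteq> monoms r n \<Longrightarrow> lm ord p \<in> Poly_Mapping.keys p"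
  using lm_in_keys_greatest by blast

lemma lm_greatest:
  "p \<noteq> 0 \<Longrightarrow> Poly_Mapping.keys p \<subseteq> monoms r n \<Longrightarrow> m \<in> Poly_Mapping.keys p \<Longrightarrow> m \<noteq> lm ord p
    \<Longrightarrow> ord m (lm ord p)"
  using lm_in_keys_greatest by blast

lemma cancel_lm:
  fixes q :: "'k::field mpoly"
  assumes B: "B \<subseteq> polys r n - {0}" and q: "q \<in> polys r n" "q \<noteq> 0" "lm ord q \<in> lm ord ` B"
  obtains q1 where "q1 \<in> polys r n" "q - q1 \<in> V.span B" "q1 = 0 \<or> ord (lm ord q1) (lm ord q)"
proof -
  obtain b where b: "b \<in> B" "lm ord b = lm ord q"
    using q(3) by auto
  have "b \<in> polys r n" "b \<noteq> 0"
    using b(1) B by auto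
  then have keys_q: "Poly_Mapping.keys q \<subseteq> monoms r n" and keys_b: "Poly_Mapping.keys b \<subseteq> monoms r n"
    and lm_b: "lm ord q \<in> Poly_Mapping.keys b"
    using q(1) lm_in_keys[of b] b(2) by (auto simp: polys_def)
  define c where "c = Poly_Mapping.lookup q (lm ord q) / Poly_Mapping.lookup b (lm ord q)"
  define q1 where "q1 = q - cmult c b"
  have "q1 \<in> polys r n"
    unfolding q1_def using q(1) \<open>b \<in> polys r n\<close> by (intro V.subspace_diff V.subspace_scale subspace_polys)
  moreover have "q - q1 \<in> V.span B"
    unfolding q1_def using b(1) by (simp add: V.span_scale V.span_base)
  moreover have "ord (lm ord q1) (lm ord q)" if "q1 \<noteq> 0"
  proof -
    have "Poly_Mapping.keys q1 \<subseteq> Poly_Mapping.keys q \<union> Poly_Mapping.keys b"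
      using keys_diff[of q "cmult c b"] keys_cmult_subset[of c b] unfolding q1_def by blast
    then have lm_q1: "lm ord q1 \<in> Poly_Mapping.keys q \<union> Poly_Mapping.keys b"
      and keys_q1: "Poly_Mapping.keys q1 \<subseteq> monoms r n"
      using lm_in_keys[OF that] keys_q keys_b by blast+
    have "Poly_Mapping.lookup q1 (lm ord q) = 0"
      using lm_b by (simp add: q1_def c_def lookup_minus in_keys_iff)
    then have "lm ord q1 \<noteq> lm ord q"
      using lm_in_keys[OF that keys_q1] by (metis in_keys_iff)
    then show ?thesis
      using lm_q1 lm_greatest[OF q(2) keys_q] lm_greatest[OF \<open>b \<noteq> 0\<close> keys_b] b(2) by auto
  qed
  ultimately show ?thesis
    using that by blast
qed

lemma reduce_modulo_lms:
  assumes B: "B \<subseteq> polys r n - {0}" and q: "q \<in> polys r n"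
  shows "\<exists>q'\<in>polys r n. q - q' \<in> V.span B \<and> (q' = 0 \<or> lm ord q' \<notin> lm ord ` B)"
proof -
  have "\<forall>q\<in>polys r n. q \<noteq> 0 \<longrightarrow> lm ord q = \<mu> \<longrightarrow>
      (\<exists>q'\<in>polys r n. q - q' \<in> V.span B \<and> (q' = 0 \<or> lm ord q' \<notin> lm ord ` B))" for \<mu>
    using wf_ord
  proof (induction \<mu> rule: wf_induct_rule)
    case (less \<mu>)
    show ?case
    proof (intro ballI impI)
      fix q :: "'a mpoly" assume q: "q \<in> polys r n" "q \<noteq> 0" "lm ord q = \<mu>"
      show "\<exists>q'\<in>polys r n. q - q' \<in> V.span B \<and> (q' = 0 \<or> lm ord q' \<notin> lm ord ` B)"
      proof (cases "lm ord q \<in> lm ord ` B")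
        case True
        then obtain q1 where q1: "q1 \<in> polys r n" "q - q1 \<in> V.span B"
            "q1 = 0 \<or> ord (lm ord q1) (lm ord q)"
          using cancel_lm[OF B q(1,2)] by blast
        show ?thesis
        proof (cases "q1 = 0")
          case False
          have "lm ord q1 \<in> monoms r n" "lm ord q \<in> monoms r n"
            using lm_in_keys[OF False] lm_in_keys[OF q(2)] q1(1) q(1) unfolding polys_def by auto
          then obtain q' where q': "q' \<in> polys r n" "q1 - q' \<in> V.span B"
              "q' = 0 \<or> lm ord q' \<notin> lm ord ` B"
            using less.IH q1 q(3) False by blast
          have "q - q' = (q - q1) + (q1 - q')"
            by simp
          then show ?thesis
            using q' V.span_add[OF q1(2) q'(2)] by auto
        qed (use q1 in \<open>auto intro: bexI[of _ 0] simp: zero_in_polys\<close>)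
      qed (use q in \<open>auto intro: bexI[of _ q] simp: V.span_zero\<close>)
    qed
  qed
  then show ?thesis
  proof (cases "q = 0")
    case True
    then show ?thesis by (intro bexI[of _ 0]) (simp_all add: zero_in_polys V.span_zero)
  qed (use q in blast)
qed

lemma ex_lm_injective_basis:
  "set R \<subseteq> polys r n \<Longrightarrow> \<exists>B :: 'a::field mpoly set. finite B \<and> B \<subseteq> polys r n - {0} \<and>
     inj_on (lm ord) B \<and> card B \<le> length R \<and> V.span B = V.span (set R)"
proof (induction R)
  case Nil
  show ?case by (intro exI[of _ "{}"]) simp
next
  case (Cons q R)
  then obtain B where B: "finite B" "B \<subseteq> polys r n - {0}" "inj_on (lm ord) B" "card B \<le> length R"
    "V.span B = V.span (set R)" by auto
  have "q \<in> polys r n"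
    using Cons.prems by simp
  then obtain q' where q': "q' \<in> polys r n" "q - q' \<in> V.span B" "q' = 0 \<or> lm ord q' \<notin> lm ord ` B"
    using reduce_modulo_lms[OF B(2)] by blast
  have span_q: "V.span (insert q B) = V.span (set (q # R))"
    using B(5) by (simp add: V.span_insert)
  show ?case
  proof (cases "q' = 0")
    case True
    then have "V.span (insert q B) = V.span B"
      using q'(2) by (simp add: V.span_redundant)
    then show ?thesis using B span_q by (intro exI[of _ B]) auto
  next
    case False
    have "V.span (insert q' B) = V.span (insert q B)"
      using V.eq_span_insert_eq[OF q'(2)] by simp
    then show ?thesis
      using B span_q q' False by (intro exI[of _ "insert q' B"]) (auto simp: card_insert_if)
  qed
qed

lemma ex_sorted_by_lm:
  assumes "finite B" "B \<subseteq> polys r n - {0}" "inj_on (lm ord) B"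
  shows "\<exists>bs. distinct bs \<and> set bs = B \<and> sorted_wrt (\<lambda>p q. ord (lm ord q) (lm ord p)) bs"
proof (rule finite_strict_total_order_sorted_list[OF assms(1)])
  have lm_B: "lm ord p \<in> monoms r n" if "p \<in> B" for p
    using that assms(2) lm_in_keys unfolding polys_def by blast
  show "irreflp_on B (\<lambda>p q. ord (lm ord q) (lm ord p))"
    using lm_B irreflp_onD[OF irreflp_on_ord] by (simp add: irreflp_on_def)
  show "transp_on B (\<lambda>p q. ord (lm ord q) (lm ord p))"
    using lm_B transp_onD[OF transp_on_ord] unfolding transp_on_def by blast
  show "totalp_on B (\<lambda>p q. ord (lm ord q) (lm ord p))"
  proof (rule totalp_onI)
    fix p q assume pq: "p \<in> B" "q \<in> B" "p \<noteq> q"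
    then have "lm ord p \<noteq> lm ord q"
      using inj_onD[OF assms(3)] by blast
    then show "ord (lm ord q) (lm ord p) \<or> ord (lm ord p) (lm ord q)"
      using totalp_onD[OF totalp_on_ord] lm_B pq by blast
  qed
qed

lemma ex_row_echelon:
  assumes "set R \<subseteq> polys r n"
  shows "\<exists>E. is_row_echelon_of ord R (E :: 'a::field mpoly list)"
proof -
  obtain B where B: "finite B" "B \<subseteq> polys r n - {0}" "inj_on (lm ord) B" "card B \<le> length R"
      "V.span B = V.span (set R)"
    using ex_lm_injective_basis[OF assms] by blast
  then obtain bs where bs: "distinct bs" "set bs = B" "sorted_wrt (\<lambda>p q. ord (lm ord q) (lm ord p)) bs"
    using ex_sorted_by_lm by blast
  define E where "E = bs @ replicate (length R - card B) 0"
  have "length E = length R"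
    unfolding E_def using B(4) distinct_card[OF bs(1)] bs(2) by simp
  moreover have "set E = B \<or> set E = insert 0 B"
    unfolding E_def using bs(2) by (cases "length R - card B") auto
  then have "V.span (set E) = V.span B"
    by (elim disjE) simp_all
  moreover have "\<forall>p\<in>set bs. p \<noteq> 0"
    using B(2) bs(2) by blast
  ultimately have "is_row_echelon_of ord R E"
    unfolding is_row_echelon_of_def lin_span_eq_span using B(5) bs(3)
    by (intro conjI exI[of _ bs] exI[of _ "length R - card B"]) (simp_all add: E_def)
  then show ?thesis ..
qed

lemma lead_setE:
  assumes "set R \<subseteq> polys r n" "\<beta> \<in> lead_set ord (R :: 'a::field mpoly list)"
  obtains g where "g \<in> V.span (set R)" "g \<noteq> 0" "lm ord g = \<beta>"
proof -
  let ?E = "SOME E. is_row_echelon_of ord R (E :: 'a mpoly list)"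
  have "is_row_echelon_of ord R ?E"
    using ex_row_echelon[OF assms(1)] by (rule someI_ex)
  then have "V.span (set ?E) = V.span (set R)"
    unfolding is_row_echelon_of_def lin_span_eq_span by blast
  moreover obtain p where "p \<in> set ?E" "p \<noteq> 0" "lm ord p = \<beta>"
    using assms(2) unfolding lead_set_def Let_def by auto
  ultimately show ?thesis
    using that V.span_base by blast
qed

section \<open>The rows of M3H\<close>

lemma monom_mults_in_subspace:
  fixes f :: "'k::field mpoly"
  assumes S: "V.subspace S" and M: "M \<subseteq> monoms r n"
    and step: "\<And>\<beta>. \<beta> \<in> M \<Longrightarrow> monom_mult \<beta> f \<in> S \<or>
      (\<exists>g. g \<noteq> 0 \<and> Poly_Mapping.keys g \<subseteq> M \<and> lm ord g = \<beta> \<and> g * f \<in> S)"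
  shows "\<beta> \<in> M \<Longrightarrow> monom_mult \<beta> f \<in> S"
  using wf_ord
proof (induction \<beta> rule: wf_induct_rule)
  case (less \<beta>)
  show ?case
    using step[OF less.prems]
  proof (elim disjE exE conjE)
    fix g assume g: "g \<noteq> 0" "Poly_Mapping.keys g \<subseteq> M" "lm ord g = \<beta>" "g * f \<in> S"
    define c where "c = Poly_Mapping.lookup g \<beta>"
    have keys_g: "Poly_Mapping.keys g \<subseteq> monoms r n"
      using g(2) M by blast
    have \<beta>: "\<beta> \<in> Poly_Mapping.keys g"
      using lm_in_keys[OF g(1) keys_g] g(3) by simp
    then have "c \<noteq> 0"
      by (simp add: c_def in_keys_iff)
    define lower where
      "lower = (\<Sum>\<gamma>\<in>Poly_Mapping.keys g - {\<beta>}. cmult (Poly_Mapping.lookup g \<gamma>) (monom_mult \<gamma> f))"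
    have "lower \<in> S"
      unfolding lower_def
    proof (intro V.subspace_sum[OF S] V.subspace_scale[OF S])
      fix \<gamma> assume \<gamma>: "\<gamma> \<in> Poly_Mapping.keys g - {\<beta>}"
      then have "ord \<gamma> \<beta>"
        using lm_greatest[OF g(1) keys_g] g(3) by blast
      then show "monom_mult \<gamma> f \<in> S"
        using less.IH \<gamma> g(2) keys_g \<beta> by blast
    qed
    have "g * f = cmult c (monom_mult \<beta> f) + lower"
      unfolding mult_eq_sum_monom_mults[of g] lower_def c_def
      using \<beta> by (simp add: sum.remove)
    then have "monom_mult \<beta> f = cmult (inverse c) (g * f - lower)"
      using \<open>c \<noteq> 0\<close> by simp
    also have "\<dots> \<in> S"
      using g(4) \<open>lower \<in> S\<close> by (intro V.subspace_scale[OF S] V.subspace_diff[OF S])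
    finally show ?thesis .
  qed
qed

lemma set_M3H_rev_Cons:
  "set (M3H_rev r n ord (f # fs) d) = set (M3H_rev r n ord fs d) \<union>
     (\<lambda>\<beta>. monom_mult \<beta> f) ` (monoms_deg r n (deg_sub d (pdeg r n f)) -
       (if fs = [] then {} else lead_set ord (M3H_rev r n ord fs (deg_sub d (pdeg r n f)))))"
proof -
  let ?e = "deg_sub d (pdeg r n f)"
  have "set (dec_list ord (monoms_deg r n ?e - L)) = monoms_deg r n ?e - L" for L
    using finite_monoms_deg by (intro set_dec_list) (auto simp: monoms_deg_def)
  then show ?thesis
    by (simp add: Let_def)
qed

lemma set_M3H_rev_subset:
  "homogeneous_gens r n fs \<Longrightarrow> set (M3H_rev r n ord fs d) \<subseteq> deg_multiples r n (fs :: 'k::field mpoly list) d"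
proof (induction fs arbitrary: d)
  case (Cons f fs)
  then have "set (M3H_rev r n ord fs d) \<subseteq> deg_multiples r n fs d"
    by (simp add: homogeneous_gens_def)
  then show ?case
    unfolding set_M3H_rev_Cons deg_multiples_Cons by blast
qed simp

lemma lead_set_M3H_rev_witness:
  fixes f :: "'k::field mpoly"
  assumes fs: "homogeneous_gens r n fs" and f: "f \<in> polys r n" "multihomogeneous r n f"
    and d: "length d = r"
    and span_e: "V.span (set (M3H_rev r n ord fs (deg_sub d (pdeg r n f)))) =
      V.span (deg_multiples r n fs (deg_sub d (pdeg r n f)))"
    and \<beta>: "\<beta> \<in> lead_set ord (M3H_rev r n ord fs (deg_sub d (pdeg r n f)))"
  obtains g where "g \<noteq> 0" "Poly_Mapping.keys g \<subseteq> monoms_deg r n (deg_sub d (pdeg r n f))"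
    "lm ord g = \<beta>" "g * f \<in> V.span (deg_multiples r n fs d)"
proof -
  let ?e = "deg_sub d (pdeg r n f)"
  have e: "length ?e = r"
    using d by simp
  have "set (M3H_rev r n ord fs ?e) \<subseteq> polys r n"
    using set_M3H_rev_subset[OF fs] deg_multiples_subset_polys_deg[OF fs e] polys_deg_subset_polys
    by blast
  then obtain g where g: "g \<in> V.span (set (M3H_rev r n ord fs ?e))" "g \<noteq> 0" "lm ord g = \<beta>"
    using \<beta> by (rule lead_setE)
  have "g \<in> polys_deg r n ?e"
    using g(1) V.span_minimal[OF deg_multiples_subset_polys_deg[OF fs e] subspace_polys_deg]
    unfolding span_e by blast
  moreover have "f * g \<in> V.span (deg_multiples r n fs d)"
    using g(1) unfolding span_e by (rule mult_span_deg_multiples[OF f d])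
  ultimately show ?thesis
    using that g(2,3) by (simp add: polys_deg_def mult.commute)
qed

lemma deg_multiples_Cons_subset_span_M3H_rev:
  fixes f :: "'k::field mpoly"
  assumes fs: "homogeneous_gens r n (f # fs)" and d: "length d = r"
    and IH: "\<And>d. fs \<noteq> [] \<Longrightarrow> length d = r \<Longrightarrow>
      V.span (set (M3H_rev r n ord fs d)) = V.span (deg_multiples r n fs d)"
  shows "deg_multiples r n (f # fs) d \<subseteq> V.span (set (M3H_rev r n ord (f # fs) d))"
proof -
  let ?e = "deg_sub d (pdeg r n f)"
  let ?L = "if fs = [] then {} else lead_set ord (M3H_rev r n ord fs ?e)"
  let ?S = "V.span (set (M3H_rev r n ord (f # fs) d))"
  have f: "f \<in> polys r n" "multihomogeneous r n f" and fs': "homogeneous_gens r n fs"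
    using fs by (simp_all add: homogeneous_gens_def)
  note rows = set_M3H_rev_Cons[of f fs d]
  have old: "V.span (deg_multiples r n fs d) \<subseteq> ?S"
  proof (cases "fs = []")
    case False
    then show ?thesis
      using IH[OF False d] V.span_mono[of "set (M3H_rev r n ord fs d)" "set (M3H_rev r n ord (f # fs) d)"]
      unfolding rows by blast
  qed (simp add: V.span_zero)
  have new: "monom_mult \<beta> f \<in> ?S" if "\<beta> \<in> monoms_deg r n ?e" for \<beta>
  proof (rule monom_mults_in_subspace[OF V.subspace_span _ _ that])
    show "monoms_deg r n ?e \<subseteq> monoms r n"
      by (auto simp: monoms_deg_def)
  next
    fix \<beta> assume \<beta>: "\<beta> \<in> monoms_deg r n ?e"
    show "monom_mult \<beta> f \<in> ?S \<or> (\<exists>g. g \<noteq> 0 \<and> Poly_Mapping.keys g \<subseteq> monoms_deg r n ?e \<and>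
      lm ord g = \<beta> \<and> g * f \<in> ?S)"
    proof (cases "\<beta> \<in> ?L")
      case True
      then have "fs \<noteq> []" and "\<beta> \<in> lead_set ord (M3H_rev r n ord fs ?e)"
        by (auto split: if_splits)
      then obtain g where "g \<noteq> 0" "Poly_Mapping.keys g \<subseteq> monoms_deg r n ?e" "lm ord g = \<beta>"
          "g * f \<in> V.span (deg_multiples r n fs d)"
        using lead_set_M3H_rev_witness[OF fs' f d] IH d by auto
      then show ?thesis
        using old by blast
    qed (use \<beta> rows in \<open>blast intro: V.span_base\<close>)
  qed
  show ?thesis
    unfolding deg_multiples_Cons using new old V.span_superset by blast
qed

lemma span_M3H_rev:
  "homogeneous_gens r n fs \<Longrightarrow> fs \<noteq> [] \<Longrightarrow> length d = r \<Longrightarrow>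
    V.span (set (M3H_rev r n ord fs d)) = V.span (deg_multiples r n (fs :: 'k::field mpoly list) d)"
proof (induction fs arbitrary: d)
  case (Cons f fs)
  have "homogeneous_gens r n fs"
    using Cons.prems(1) by (simp add: homogeneous_gens_def)
  then have "deg_multiples r n (f # fs) d \<subseteq> V.span (set (M3H_rev r n ord (f # fs) d))"
    using Cons.IH by (intro deg_multiples_Cons_subset_span_M3H_rev Cons.prems) blast
  moreover have "set (M3H_rev r n ord (f # fs) d) \<subseteq> V.span (deg_multiples r n (f # fs) d)"
    using set_M3H_rev_subset[OF Cons.prems(1)] V.span_superset by blast
  ultimately show ?case
    unfolding V.span_eq by blast
qed simp

end

theorem mainTheorem16:
  fixes r :: nat and n :: "nat \<Rightarrow> nat" and ord :: "mon \<Rightarrow> mon \<Rightarrow> bool"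
    and fs :: "'k::field_char_0 mpoly list" and d :: "int list"
  assumes "monomial_order r n ord"
    and "fs \<noteq> []"
    and "\<forall>f\<in>set fs. f \<in> polys r n \<and> f \<noteq> 0 \<and> multihomogeneous r n f"
    and "length d = r"
  shows "lin_span (set (M3H r n ord fs d)) = ideal_deg r n fs d"
proof -
  interpret mon_order r n ord
    using assms(1) by unfold_locales
  have fs: "homogeneous_gens r n fs" and rev_fs: "homogeneous_gens r n (rev fs)"
    using assms(3) by (simp_all add: homogeneous_gens_def)
  have "lin_span (set (M3H r n ord fs d)) = V.span (set (M3H_rev r n ord (rev fs) d))"
    by (simp add: M3H_def lin_span_eq_span)
  also have "\<dots> = V.span (deg_multiples r n fs d)"
    using span_M3H_rev[OF rev_fs _ assms(4)] assms(2) by simp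
  also have "\<dots> = ideal_deg r n fs d"
    using ideal_deg_eq_span_deg_multiples[OF fs assms(4)] by simp
  finally show ?thesis .
qed

end
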